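(* Let $n\ge 4$ be a power of $4$ and let $\mathcal{H}_2$ be as in the context. Then: (a) For all integers $i,j$, $\mathbb{E}_{h\in\mathcal{H}_2}[h_ih_j]=\mathbb{E}_{h\in\mathcal{H}_2}[h_{i+\sqrt n}h_{j+\sqrt n}]$. (b) If $1\le i,i',j,j'\le n$ with $i,i'$ in the same block, $j,j'$ in the same block, $i\ne j$ and $i'\ne j'$, then $\mathbb{E}_{h\in\mathcal{H}_2}[h_ih_j]=\mathbb{E}_{h\in\mathcal{H}_2}[h_{i'}h_{j'}]$. (c) There is an absolute constant $C$ (independent of $n$) such that $\sum_{1\le i,j\le n,\ i\ne j}\left|\mathbb{E}_{h\in\mathcal{H}_2}[h_ih_j]\right|\le Cn$.
   Context: Let $n$ be a power of $4$, $\ell=\sqrt n/2$, and for $1\le c\le \sqrt n$ the $c$-th block is $\{(c-1)\sqrt n+1,\dots,c\sqrt n\}$. The family $\mathcal{H}_1$: a random $h:[n]\to\{-1,1\}$ with independent coordinates, $\mathbb{P}[h_i=1]=\tfrac12+\tfrac{1}{2(\ell+1-c)}$ for $i$ in block $c\le\ell$ and $\mathbb{P}[h_i=1]=\tfrac12-\tfrac{1}{2(c-\ell)}$ for $i$ in block $c\ge\ell+1$. Indices are taken modulo $n$ ($h_{i+n}=h_i$). The family $\mathcal{H}_2$: draw $h$ from $\mathcal{H}_1$ and independently $d$ uniform in $\{0,1,\dots,\sqrt n-1\}$, and output $h'$ with $h'_i=h_{i+d\sqrt n}$ for all $i$ (indices modulo $n$). *)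

theory Defs
  imports "HOL-Probability.Probability"
begin

(* sqrt n as a natural number (exact when n is a power of 4) *)
definition sqn :: "nat \<Rightarrow> nat" where
  "sqn n = nat \<lfloor>sqrt (real n)\<rfloor>"

definition ell :: "nat \<Rightarrow> nat" where
  "ell n = sqn n div 2"

definition blk :: "nat \<Rightarrow> nat \<Rightarrow> nat" where
  "blk n i = (i - 1) div sqn n + 1"

definition p1 :: "nat \<Rightarrow> nat \<Rightarrow> real" where
  "p1 n i = (let c = blk n i in
     if c \<le> ell n then 1/2 + 1 / (2 * (real (ell n) + 1 - real c))
     else 1/2 - 1 / (2 * (real c - real (ell n))))"

definition sign_pmf :: "real \<Rightarrow> real pmf" where
  "sign_pmf p = map_pmf (\<lambda>b. if b then 1 else -1) (bernoulli_pmf p)"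

(* vectors h : [n] -> {-1,1} are functions nat => real, supported on {1..n} (value 0 elsewhere) *)
definition H1 :: "nat \<Rightarrow> (nat \<Rightarrow> real) pmf" where
  "H1 n = Pi_pmf {1..n} 0 (\<lambda>i. sign_pmf (p1 n i))"

(* h_i for an arbitrary integer index i, taken modulo n (h_{i+n} = h_i) *)
definition hv :: "nat \<Rightarrow> (nat \<Rightarrow> real) \<Rightarrow> int \<Rightarrow> real" where
  "hv n h i = h (nat ((i - 1) mod int n) + 1)"

definition H2 :: "nat \<Rightarrow> (nat \<Rightarrow> real) pmf" where
  "H2 n = do {
     d \<leftarrow> pmf_of_set {0..<sqn n};
     h \<leftarrow> H1 n;
     return_pmf (\<lambda>i. if i \<in> {1..n} then hv n h (int i + int (d * sqn n)) else 0)
   }"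

definition corr2 :: "nat \<Rightarrow> int \<Rightarrow> int \<Rightarrow> real" where
  "corr2 n i j = measure_pmf.expectation (H2 n) (\<lambda>h. hv n h i * hv n h j)"

end

theory Submission
  imports Defs
begin

text \<open>
  For \<open>i \<noteq> j\<close> the coordinates of \<open>h \<in> \<H>\<^sub>1\<close> are independent, so \<open>E[h\<^sub>i h\<^sub>j]\<close> is the product of their
  means \<open>2p - 1\<close>, which depend only on the block: \<open>1/l, \<dots>, 1/1, -1/1, \<dots>, -1/l\<close>. Averaging over the
  uniform block shift \<open>d\<close> of \<open>\<H>\<^sub>2\<close> turns \<open>E[h\<^sub>i h\<^sub>j]\<close> into \<open>\<gamma>(t)/\<surd>n\<close>, where \<open>\<gamma>\<close> is the cyclic
  autocorrelation of this bias sequence and \<open>t\<close> the block distance of \<open>i\<close> and \<open>j\<close>; this gives (b), and (a)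
  holds because a shift by one block only relabels \<open>d\<close>.
  For (c) each row contributes \<open>\<Sum>\<^sub>t |\<gamma>(t)|\<close>, which stays bounded: splitting the autocorrelation at the
  sign changes and using partial fractions gives
  \<open>\<gamma>(t) = 2H\<^sub>t/(t(t+1)) - 2D\<^sub>t/t - 2D\<^sub>t/(2l+1-t)\<close> with \<open>D\<^sub>t = H\<^sub>l - H\<^bsub>l-t\<^esub>\<close>, and
  \<open>\<Sum>\<^sub>t H\<^sub>t/(t(t+1)) \<le> 2\<close>, \<open>\<Sum>\<^sub>t D\<^sub>t = l\<close>.
\<close>

section \<open>Sums of reciprocals\<close>

lemma harm_eq_sum_divide: "harm n = (\<Sum>k=1..n. 1 / real k)"
  by (simp add: harm_def divide_inverse)

lemma harm_diff_eq_sum: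
  assumes "t \<le> l"
  shows "harm l - harm (l - t) = (\<Sum>k=Suc (l - t)..l. 1 / real k)"
  using sum.ub_add_nat[of 1 "l - t" "\<lambda>k. 1 / real k" t] assms by (simp add: harm_eq_sum_divide)

lemma harm_diff_nonneg: "t \<le> l \<Longrightarrow> 0 \<le> harm l - (harm (l - t) :: real)"
  using harm_mono[of "l - t" l] by simp

text \<open>Partial fractions, \<open>1/(k(a+b-k)) = (1/k + 1/(a+b-k))/(a+b)\<close>, and symmetry of the interval.\<close>
lemma sum_reciprocal_product_reflect:
  assumes "0 < a"
  shows "(\<Sum>k=a..b. 1 / (real k * real (a + b - k))) = 2 * (\<Sum>k=a..b. 1 / real k) / real (a + b)"
proof -
  have "(\<Sum>k=a..b. 1 / (real k * real (a + b - k)))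
      = (\<Sum>k=a..b. (1 / real k + 1 / real (a + b - k)) / real (a + b))"
  proof (rule sum.cong[OF refl])
    fix k assume "k \<in> {a..b}"
    with assms have pos: "real k > 0" "real (a + b - k) > 0"
      and sum: "real (a + b) = real k + real (a + b - k)"
      by auto
    have "1 / (x * y) = (1 / x + 1 / y) / (x + y)" if "x > 0" "y > 0" for x y :: real
      using that by (simp add: divide_simps)
    from this[OF pos] show "1 / (real k * real (a + b - k)) = (1 / real k + 1 / real (a + b - k)) / real (a + b)"
      unfolding sum .
  qed
  also have "\<dots> = ((\<Sum>k=a..b. 1 / real k) + (\<Sum>k=a..b. 1 / real (a + b - k))) / real (a + b)"
    by (simp only: add_divide_distrib sum_divide_distrib sum.distrib)
  also have "(\<Sum>k=a..b. 1 / real (a + b - k)) = (\<Sum>k=a..b. 1 / real k)"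
    by (subst (2) sum.atLeastAtMost_rev) (simp add: add.commute)
  finally show ?thesis by simp
qed

lemma sum_reciprocal_product_shift:
  assumes "1 \<le> t"
  shows "(\<Sum>k=1..L. 1 / (real k * (real k + real t))) = (harm t + harm L - harm (L + t)) / real t"
proof (induction L)
  case (Suc L)
  have "1 / (x * (x + real t)) = (1 / x - 1 / (x + real t)) / real t" if "x > 0" for x :: real
    using that assms by (simp add: divide_simps)
  from this[of "real (Suc L)"]
  have "1 / (real (Suc L) * (real (Suc L) + real t)) = (1 / real (Suc L) - 1 / real (Suc L + t)) / real t"
    by simp
  with Suc show ?case
    by (simp only: sum.cl_ivl_Suc harm_Suc inverse_eq_divide add_Suc) (simp add: diff_divide_distrib add_divide_distrib)
qed (simp add: harm_def)

lemma sum_inverse_square_le: "(\<Sum>t=1..L. 1 / real t ^ 2) \<le> 2 - 2 / (real L + 1)"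
proof (induction L)
  case (Suc L)
  have "1 / real (Suc L) ^ 2 \<le> 2 / real (Suc L) - 2 / (real (Suc L) + 1)"
    by (simp add: divide_simps power2_eq_square)
  with Suc show ?case by (simp add: add.commute)
qed simp

text \<open>Summation by parts: the partial sums of the left-hand side plus \<open>H\<^sub>L/(L+1)\<close> are \<open>\<Sum>1/t\<^sup>2\<close>.\<close>
lemma sum_harm_div_triangular_le: "(\<Sum>t=1..L. harm t / (real t * (real t + 1))) \<le> 2"
proof -
  have parts: "(\<Sum>t=1..L. harm t / (real t * (real t + 1))) + harm L / (real L + 1)
      = (\<Sum>t=1..L. 1 / real t ^ 2)" for L
  proof (induction L)
    case (Suc L)
    have "harm (Suc L) / (real (Suc L) * (real (Suc L) + 1)) + harm (Suc L) / (real (Suc L) + 1)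
          - harm L / (real L + 1) = 1 / real (Suc L) ^ 2"
      by (simp add: harm_Suc inverse_eq_divide divide_simps power2_eq_square) (simp add: algebra_simps)
    with Suc show ?case by simp
  qed (simp add: harm_def)
  have "0 \<le> harm L / (real L + 1)" "0 \<le> 2 / (real L + 1)"
    by (simp_all add: harm_nonneg)
  with parts[of L] sum_inverse_square_le[of L] show ?thesis
    by linarith
qed

lemma sum_harm_diff: "(\<Sum>t=1..l. harm l - harm (l - t)) = (real l :: real)"
proof -
  have "(\<Sum>t=1..l. harm l - harm (l - t)) = (\<Sum>j<l. harm l - (harm j :: real))"
    by (rule sum.reindex_bij_witness[of _ "\<lambda>j. l - j" "\<lambda>t. l - t"]) auto
  also have "\<dots> = real l"
  proof (induction l)
    case (Suc l)
    have "(\<Sum>j<Suc l. harm (Suc l) - (harm j :: real))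
        = (\<Sum>j<Suc l. (harm l - harm j) + 1 / real (Suc l))"
      by (simp add: harm_Suc inverse_eq_divide algebra_simps)
    also have "\<dots> = (\<Sum>j<l. harm l - harm j) + 1"
      by (simp add: sum.distrib)
    finally show ?case using Suc by simp
  qed simp
  finally show ?thesis .
qed

lemma harm_diff_le:
  assumes "t \<le> l"
  shows "harm l - harm (l - t) \<le> real t / (real l - real t + 1)"
proof -
  have "(\<Sum>k=Suc (l - t)..l. 1 / real k) \<le> real (card {Suc (l - t)..l}) * (1 / (real l - real t + 1))"
  proof (rule sum_bounded_above)
    fix k assume "k \<in> {Suc (l - t)..l}"
    with assms have "real l - real t + 1 \<le> real k" "0 < real l - real t + 1"
      by (auto simp: of_nat_diff)
    then show "1 / real k \<le> 1 / (real l - real t + 1)"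
      by (simp add: frac_le)
  qed
  with assms show ?thesis
    by (simp add: harm_diff_eq_sum)
qed

lemma harm_diff_div_le:
  assumes "1 \<le> t" "t \<le> l"
  shows "(harm l - harm (l - t)) / real t \<le> 2 / real l + 2 * ((harm l - harm (l - t)) / real l)"
proof -
  have D: "0 \<le> harm l - (harm (l - t) :: real)"
    using harm_diff_nonneg[OF assms(2)] .
  show ?thesis
  proof (cases "2 * t \<le> l")
    case True
    have "(harm l - harm (l - t)) / real t \<le> 1 / (real l - real t + 1)"
      using divide_right_mono[OF harm_diff_le[OF assms(2)], of "real t"] assms by simp
    also have "\<dots> \<le> 2 / real l"
      using True assms by (simp add: divide_simps)
    finally show ?thesis
      using D by (simp add: add_increasing2)
  next
    case False
    then have "1 / real t \<le> 2 / real l"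
      using assms by (simp add: divide_simps)
    from mult_left_mono[OF this D] have "(harm l - harm (l - t)) / real t \<le> 2 * ((harm l - harm (l - t)) / real l)"
      by (simp add: mult.commute)
    then show ?thesis
      by (simp add: add_increasing)
  qed
qed

section \<open>The autocorrelation of the block biases\<close>

text \<open>With \<open>2l\<close> blocks numbered from \<open>0\<close>, the coordinates in block \<open>q\<close> of \<open>\<H>\<^sub>1\<close> have mean
  \<open>block_bias l q\<close>.\<close>
definition block_bias :: "nat \<Rightarrow> nat \<Rightarrow> real" where
  "block_bias l q = (if q < l then 1 / real (l - q) else - 1 / real (q + 1 - l))"

definition bias_autocorr :: "nat \<Rightarrow> nat \<Rightarrow> real" where
  "bias_autocorr l t = (\<Sum>p<2*l. block_bias l p * block_bias l ((p + t) mod (2*l)))"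

lemma block_bias_sub: "1 \<le> m \<Longrightarrow> m \<le> l \<Longrightarrow> block_bias l (l - m) = 1 / real m"
  by (simp add: block_bias_def)

lemma block_bias_add: "1 \<le> k \<Longrightarrow> block_bias l (l + k - 1) = - 1 / real k"
  by (auto simp: block_bias_def of_nat_diff)

lemma block_bias_lt: "q < l \<Longrightarrow> block_bias l q = 1 / real (l - q)"
  by (simp add: block_bias_def)

lemma block_bias_ge: "l \<le> q \<Longrightarrow> block_bias l q = - 1 / real (q + 1 - l)"
  by (simp add: block_bias_def)

lemma abs_block_bias_le: "\<bar>block_bias l q\<bar> \<le> 1"
  by (simp add: block_bias_def)

lemma sum_lessThan_add_mod:
  assumes "0 < (s::nat)"
  shows "(\<Sum>d<s. f ((a + d) mod s)) = (\<Sum>d<s. f d)"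
proof -
  have inj: "inj_on (\<lambda>d. (a + d) mod s) {..<s}"
  proof (rule inj_onI)
    fix x y assume "x \<in> {..<s}" "y \<in> {..<s}" "(a + x) mod s = (a + y) mod s"
    moreover from \<open>(a + x) mod s = (a + y) mod s\<close> have "x mod s = y mod s"
      by (simp add: nat_mod_eq_iff)
    ultimately show "x = y"
      by simp
  qed
  then have "(\<lambda>d. (a + d) mod s) ` {..<s} = {..<s}"
    using assms by (intro endo_inj_surj) auto
  with inj show ?thesis
    using sum.reindex[OF inj, of f] by simp
qed

lemma sum_lessThan_double_split:
  "(\<Sum>p<2*(l::nat). F p) = (\<Sum>m=1..l. F (l - m)) + (\<Sum>k=1..l. F (l + k - 1))"
proof -
  have "(\<Sum>p<2*l. F p) = (\<Sum>p<l. F p) + (\<Sum>p=l..<2*l. F p)"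
    using sum.atLeastLessThan_concat[of 0 l "2*l" F] by (simp add: atLeast0LessThan)
  also have "(\<Sum>p<l. F p) = (\<Sum>m=1..l. F (l - m))"
    by (rule sum.reindex_bij_witness[of _ "\<lambda>m. l - m" "\<lambda>p. l - p"]) auto
  also have "(\<Sum>p=l..<2*l. F p) = (\<Sum>k=1..l. F (l + k - 1))"
    by (rule sum.reindex_bij_witness[of _ "\<lambda>k. l + k - 1" "\<lambda>p. p + 1 - l"]) auto
  finally show ?thesis .
qed

lemma bias_autocorr_halves:
  "bias_autocorr l t = (\<Sum>m=1..l. block_bias l ((l - m + t) mod (2*l)) / real m)
                     - (\<Sum>k=1..l. block_bias l ((l + k - 1 + t) mod (2*l)) / real k)"
  unfolding bias_autocorr_def sum_lessThan_double_split diff_conv_add_uminus sum_negf[symmetric]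
proof (intro arg_cong2[where f="(+)"] sum.cong refl)
  fix k assume "k \<in> {1..l}"
  then show "block_bias l (l + k - 1) * block_bias l ((l + k - 1 + t) mod (2 * l))
           = - (block_bias l ((l + k - 1 + t) mod (2 * l)) / real k)"
    using block_bias_add[of k l] by simp
qed (simp add: block_bias_sub)

lemma bias_autocorr_positive_half:
  assumes "1 \<le> t" "t \<le> l"
  shows "(\<Sum>m=1..l. block_bias l ((l - m + t) mod (2*l)) / real m)
       = (\<Sum>k=1..l-t. 1 / (real k * (real k + real t))) - 2 * harm t / real (1 + t)"
proof -
  let ?f = "\<lambda>m. block_bias l ((l - m + t) mod (2*l)) / real m"
  have "(\<Sum>m=1..t. ?f m) = - (\<Sum>m=1..t. 1 / (real m * real (1 + t - m)))"
  proof (subst sum_negf[symmetric], rule sum.cong[OF refl])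
    fix m assume "m \<in> {1..t}"
    with assms have "(l - m + t) mod (2*l) = l - m + t" "l \<le> l - m + t" "l - m + t + 1 - l = 1 + t - m"
      by auto
    then show "?f m = - (1 / (real m * real (1 + t - m)))"
      by (simp only: block_bias_ge) simp
  qed
  also have "\<dots> = - (2 * harm t / real (1 + t))"
    using sum_reciprocal_product_reflect[of 1 t] by (simp add: harm_eq_sum_divide)
  finally have wrapped: "(\<Sum>m=1..t. ?f m) = - (2 * harm t / real (1 + t))" .
  have "(\<Sum>m=Suc t..l. ?f m) = (\<Sum>m=Suc t..l. 1 / (real m * real (m - t)))"
  proof (rule sum.cong[OF refl])
    fix m assume "m \<in> {Suc t..l}"
    then have "(l - m + t) mod (2*l) = l - m + t" "l - m + t < l" "l - (l - m + t) = m - t"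
      by auto
    then show "?f m = 1 / (real m * real (m - t))"
      by (simp only: block_bias_lt) simp
  qed
  also have "\<dots> = (\<Sum>k=1..l-t. 1 / (real k * (real k + real t)))"
    using sum.shift_bounds_cl_nat_ivl[of "\<lambda>m. 1 / (real m * real (m - t))" 1 t "l - t"] assms
    by (simp add: ac_simps)
  finally have unwrapped: "(\<Sum>m=Suc t..l. ?f m) = (\<Sum>k=1..l-t. 1 / (real k * (real k + real t)))" .
  have "(\<Sum>m=1..l. ?f m) = (\<Sum>m=1..t. ?f m) + (\<Sum>m=Suc t..l. ?f m)"
    using sum.ub_add_nat[of 1 t ?f "l - t"] assms by simp
  with wrapped unwrapped show ?thesis
    by simp
qed

lemma bias_autocorr_negative_half:
  assumes "1 \<le> t" "t \<le> l"
  shows "(\<Sum>k=1..l. block_bias l ((l + k - 1 + t) mod (2*l)) / real k)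
       = 2 * (harm l - harm (l - t)) / real (2*l + 1 - t) - (\<Sum>k=1..l-t. 1 / (real k * (real k + real t)))"
proof -
  let ?f = "\<lambda>k. block_bias l ((l + k - 1 + t) mod (2*l)) / real k"
  have unwrapped: "(\<Sum>k=1..l-t. ?f k) = - (\<Sum>k=1..l-t. 1 / (real k * (real k + real t)))"
  proof (subst sum_negf[symmetric], rule sum.cong[OF refl])
    fix k assume "k \<in> {1..l-t}"
    then have "(l + k - 1 + t) mod (2*l) = l + k - 1 + t" "l \<le> l + k - 1 + t"
      "l + k - 1 + t + 1 - l = k + t"
      by auto
    then show "?f k = - (1 / (real k * (real k + real t)))"
      by (simp only: block_bias_ge) simp
  qed
  have "(\<Sum>k=Suc (l-t)..l. ?f k) = (\<Sum>k=Suc (l-t)..l. 1 / (real k * real (Suc (l-t) + l - k)))"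
  proof (rule sum.cong[OF refl])
    fix k assume k: "k \<in> {Suc (l-t)..l}"
    with assms have "(l + k - 1 + t) mod (2*l) = k + t - 1 - l" "k + t - 1 - l < l"
      "l - (k + t - 1 - l) = Suc (l-t) + l - k"
      by (auto simp: le_mod_geq)
    then show "?f k = 1 / (real k * real (Suc (l-t) + l - k))"
      by (simp only: block_bias_lt) simp
  qed
  also have "\<dots> = 2 * (harm l - harm (l - t)) / real (2*l + 1 - t)"
    using sum_reciprocal_product_reflect[of "Suc (l-t)" l] assms by (simp add: harm_diff_eq_sum)
  finally have wrapped: "(\<Sum>k=Suc (l-t)..l. ?f k) = 2 * (harm l - harm (l - t)) / real (2*l + 1 - t)" .
  have "(\<Sum>k=1..l. ?f k) = (\<Sum>k=1..l-t. ?f k) + (\<Sum>k=Suc (l-t)..l. ?f k)"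
    using sum.ub_add_nat[of 1 "l - t" ?f t] assms by simp
  with wrapped unwrapped show ?thesis
    by simp
qed

lemma bias_autocorr_eq:
  assumes "1 \<le> t" "t \<le> l"
  shows "bias_autocorr l t = 2 * harm t / (real t * (real t + 1)) - 2 * (harm l - harm (l - t)) / real t
                            - 2 * (harm l - harm (l - t)) / real (2*l + 1 - t)"
proof -
  define D where "D = (harm l - harm (l - t) :: real)"
  define N where "N = real (2*l + 1 - t)"
  have S: "(\<Sum>k=1..l-t. 1 / (real k * (real k + real t))) = (harm t - D) / real t"
    using sum_reciprocal_product_shift[OF assms(1), of "l - t"] assms by (simp add: D_def)
  have "real t > 0"
    using assms by simp
  then show ?thesis
    unfolding bias_autocorr_halves bias_autocorr_positive_half[OF assms] bias_autocorr_negative_half[OF assms]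
      S D_def[symmetric] N_def[symmetric]
    by (simp add: divide_simps) (simp add: algebra_simps)
qed

lemma abs_bias_autocorr_le:
  assumes "1 \<le> t" "t \<le> l"
  shows "\<bar>bias_autocorr l t\<bar>
       \<le> 2 * (harm t / (real t * (real t + 1))) + 4 / real l + 6 * ((harm l - harm (l - t)) / real l)"
proof -
  define D where "D = (harm l - harm (l - t) :: real)"
  define A where "A = harm t / (real t * (real t + 1))"
  define B where "B = D / real t"
  define C where "C = D / real (2*l + 1 - t)"
  define E where "E = D / real l"
  have D: "0 \<le> D"
    using harm_diff_nonneg[OF assms(2)] by (simp add: D_def)
  have "bias_autocorr l t = 2 * A - 2 * B - 2 * C"
    unfolding bias_autocorr_eq[OF assms] A_def B_def C_def D_def by simp
  moreover have "0 \<le> A" "0 \<le> B" "0 \<le> C" "0 \<le> E" "0 \<le> 2 / real l"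
    using D by (simp_all add: A_def B_def C_def E_def harm_nonneg)
  moreover have "B \<le> 2 / real l + 2 * E"
    using harm_diff_div_le[OF assms] by (simp add: B_def E_def D_def)
  moreover have "C \<le> E"
    unfolding C_def E_def using D assms by (intro divide_left_mono) auto
  moreover have "4 / real l = 2 * (2 / real l)"
    by simp
  ultimately show ?thesis
    unfolding A_def[symmetric] E_def[symmetric] D_def[symmetric] by linarith
qed

lemma sum_abs_bias_autocorr_upto_le:
  assumes "1 \<le> l"
  shows "(\<Sum>t=1..l. \<bar>bias_autocorr l t\<bar>) \<le> 14"
proof -
  have "(\<Sum>t=1..l. \<bar>bias_autocorr l t\<bar>)
      \<le> (\<Sum>t=1..l. 2 * (harm t / (real t * (real t + 1))) + 4 / real l + 6 * ((harm l - harm (l - t)) / real l))"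
    by (intro sum_mono abs_bias_autocorr_le) auto
  also have "\<dots> = 2 * (\<Sum>t=1..l. harm t / (real t * (real t + 1))) + real l * (4 / real l)
                  + 6 * ((\<Sum>t=1..l. harm l - harm (l - t)) / real l)"
    by (simp add: sum.distrib sum_distrib_left sum_divide_distrib)
  also have "\<dots> \<le> 2 * 2 + 4 + 6"
    using sum_harm_div_triangular_le[of l] assms unfolding sum_harm_diff by simp
  finally show ?thesis
    by simp
qed

lemma abs_bias_autocorr_0_le: "\<bar>bias_autocorr l 0\<bar> \<le> 4"
proof -
  have "bias_autocorr l 0 = (\<Sum>m=1..l. 1 / real m ^ 2) + (\<Sum>k=1..l. 1 / real k ^ 2)"
    unfolding bias_autocorr_def sum_lessThan_double_split
  proof (intro arg_cong2[where f="(+)"] sum.cong refl)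
    fix k assume "k \<in> {1..l}"
    then have "(l + k - 1 + 0) mod (2 * l) = l + k - 1"
      by auto
    with \<open>k \<in> {1..l}\<close> show "block_bias l (l + k - 1) * block_bias l ((l + k - 1 + 0) mod (2 * l)) = 1 / real k ^ 2"
      using block_bias_add[of k l] by (simp add: power2_eq_square)
  qed (auto simp: block_bias_sub power2_eq_square)
  moreover have "0 \<le> (\<Sum>m=1..l. 1 / real m ^ 2)" "0 \<le> 2 / (real l + 1)"
    by (simp_all add: sum_nonneg)
  ultimately show ?thesis
    using sum_inverse_square_le[of l] by linarith
qed

lemma bias_autocorr_reflect:
  assumes "0 < t" "t < 2*l"
  shows "bias_autocorr l (2*l - t) = bias_autocorr l t"
proof -
  have "bias_autocorr l (2*l - t)
      = (\<Sum>d<2*l. block_bias l ((t + d) mod (2*l)) * block_bias l (((t + d) mod (2*l) + (2*l - t)) mod (2*l)))"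
    unfolding bias_autocorr_def using assms
    by (intro sum_lessThan_add_mod[symmetric, where f="\<lambda>p. block_bias l p * block_bias l ((p + (2*l - t)) mod (2*l))"]) auto
  also have "\<dots> = (\<Sum>d<2*l. block_bias l d * block_bias l ((d + t) mod (2*l)))"
  proof (rule sum.cong[OF refl])
    fix d assume d: "d \<in> {..<2*l}"
    have "((t + d) mod (2*l) + (2*l - t)) mod (2*l) = (t + d + (2*l - t)) mod (2*l)"
      by (simp add: mod_add_left_eq)
    also have "t + d + (2*l - t) = d + 2*l"
      using assms by simp
    also have "(d + 2*l) mod (2*l) = d"
      using d by simp
    finally show "block_bias l ((t + d) mod (2*l)) * block_bias l (((t + d) mod (2*l) + (2*l - t)) mod (2*l))
               = block_bias l d * block_bias l ((d + t) mod (2*l))"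
      by (simp add: add.commute)
  qed
  finally show ?thesis
    unfolding bias_autocorr_def .
qed

lemma sum_abs_bias_autocorr_le:
  assumes "1 \<le> l"
  shows "(\<Sum>t<2*l. \<bar>bias_autocorr l t\<bar>) \<le> 32"
proof -
  have U: "{..<2*l} = {0} \<union> ({1..l} \<union> {Suc l..<2*l})"
    using assms by auto
  have "(\<Sum>t<2*l. \<bar>bias_autocorr l t\<bar>)
      = \<bar>bias_autocorr l 0\<bar> + ((\<Sum>t=1..l. \<bar>bias_autocorr l t\<bar>) + (\<Sum>t=Suc l..<2*l. \<bar>bias_autocorr l t\<bar>))"
    unfolding U by (subst sum.union_disjoint, auto, subst sum.union_disjoint, auto)
  moreover have "(\<Sum>t=Suc l..<2*l. \<bar>bias_autocorr l t\<bar>) \<le> (\<Sum>t=1..l. \<bar>bias_autocorr l t\<bar>)"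
  proof -
    have inj: "inj_on (\<lambda>t. 2*l - t) {Suc l..<2*l}"
      by (rule inj_onI) auto
    have "(\<Sum>t=Suc l..<2*l. \<bar>bias_autocorr l t\<bar>) = (\<Sum>t=Suc l..<2*l. \<bar>bias_autocorr l (2*l - t)\<bar>)"
      by (intro sum.cong refl) (simp add: bias_autocorr_reflect)
    also have "\<dots> = (\<Sum>u\<in>(\<lambda>t. 2*l - t) ` {Suc l..<2*l}. \<bar>bias_autocorr l u\<bar>)"
      using inj by (simp add: sum.reindex)
    also have "\<dots> \<le> (\<Sum>t=1..l. \<bar>bias_autocorr l t\<bar>)"
      by (intro sum_mono2) auto
    finally show ?thesis .
  qed
  ultimately show ?thesis
    using abs_bias_autocorr_0_le[of l] sum_abs_bias_autocorr_upto_le[OF assms] by linarith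
qed

section \<open>Pairwise correlations in \<open>\<H>\<^sub>1\<close>\<close>

lemma p1_eq_block_bias: "p1 n a = (1 + block_bias (ell n) (blk n a - 1)) / 2"
proof -
  define c where "c = blk n a"
  have "1 \<le> c"
    by (simp add: c_def blk_def)
  show ?thesis
  proof (cases "c \<le> ell n")
    case True
    then have "real (ell n - (c - 1)) = real (ell n) + 1 - real c"
      using \<open>1 \<le> c\<close> by (simp add: of_nat_diff)
    moreover have "c - 1 < ell n"
      using True \<open>1 \<le> c\<close> by simp
    ultimately show ?thesis
      using True unfolding p1_def Let_def c_def[symmetric] by (simp add: block_bias_lt add_divide_distrib)
  next
    case False
    then have "real (c - 1 + 1 - ell n) = real c - real (ell n)"
      using \<open>1 \<le> c\<close> by (simp add: of_nat_diff)
    moreover have "ell n \<le> c - 1"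
      using False by simp
    ultimately show ?thesis
      using False unfolding p1_def Let_def c_def[symmetric] by (simp add: block_bias_ge diff_divide_distrib)
  qed
qed

lemma p1_bounds: "0 \<le> p1 n a \<and> p1 n a \<le> 1"
  using abs_block_bias_le[of "ell n" "blk n a - 1"] by (simp add: p1_eq_block_bias abs_le_iff)

lemma expectation_sign_pmf:
  assumes "0 \<le> p" "p \<le> 1"
  shows "measure_pmf.expectation (sign_pmf p) f = f 1 * p + f (-1) * (1 - p)"
  unfolding sign_pmf_def using assms by simp

lemma finite_set_sign_pmf: "finite (set_pmf (sign_pmf p))"
  unfolding sign_pmf_def by simp

lemma expectation_pair_pmf_mult:
  assumes "finite (set_pmf P)" "finite (set_pmf Q)"
  shows "measure_pmf.expectation (pair_pmf P Q) (\<lambda>z. fst z * snd z :: real)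
       = measure_pmf.expectation P (\<lambda>x. x) * measure_pmf.expectation Q (\<lambda>x. x)"
proof -
  have "measure_pmf.expectation (pair_pmf P Q) (\<lambda>z. fst z * snd z :: real)
      = (\<Sum>z\<in>set_pmf P \<times> set_pmf Q. (fst z * snd z) * pmf (pair_pmf P Q) z)"
    using assms by (intro integral_measure_pmf_real) auto
  also have "\<dots> = (\<Sum>x\<in>set_pmf P. \<Sum>y\<in>set_pmf Q. (x * pmf P x) * (y * pmf Q y))"
    by (subst sum.cartesian_product) (auto intro!: sum.cong simp: pmf_pair)
  also have "\<dots> = (\<Sum>x\<in>set_pmf P. x * pmf P x) * (\<Sum>y\<in>set_pmf Q. y * pmf Q y)"
    by (simp add: sum_product)
  also have "\<dots> = measure_pmf.expectation P (\<lambda>x. x) * measure_pmf.expectation Q (\<lambda>x. x)"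
    using assms by (simp add: integral_measure_pmf_real)
  finally show ?thesis .
qed

lemma finite_set_H1: "finite (set_pmf (H1 n))"
  unfolding H1_def by (subst set_Pi_pmf) (auto intro!: finite_PiE_dflt simp: finite_set_sign_pmf)

lemma H1_pair:
  assumes "a \<in> {1..n}" "b \<in> {1..n}" "a \<noteq> b"
  shows "map_pmf (\<lambda>h. (h a, h b)) (H1 n) = pair_pmf (sign_pmf (p1 n a)) (sign_pmf (p1 n b))"
proof -
  let ?p = "\<lambda>i. sign_pmf (p1 n i)" and ?rest = "Pi_pmf ({1..n} - {a}) 0 (\<lambda>i. sign_pmf (p1 n i))"
  have "{1..n} = insert a ({1..n} - {a})"
    using assms by auto
  then have H1: "H1 n = map_pmf (\<lambda>(y, h). h(a := y)) (pair_pmf (?p a) ?rest)"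
    unfolding H1_def by (metis Pi_pmf_insert finite_Diff finite_atLeastAtMost Diff_iff insertI1)
  have "map_pmf (\<lambda>h. (h a, h b)) (H1 n) = map_pmf (\<lambda>(y, h). (id y, h b)) (pair_pmf (?p a) ?rest)"
    unfolding H1 pmf.map_comp using assms by (intro pmf.map_cong refl) auto
  also have "\<dots> = pair_pmf (map_pmf id (?p a)) (map_pmf (\<lambda>h. h b) ?rest)"
    by (rule map_pair)
  also have "map_pmf (\<lambda>h. h b) ?rest = ?p b"
    using assms by (subst Pi_pmf_component) auto
  finally show ?thesis
    by simp
qed

lemma expectation_H1_mult:
  assumes "a \<in> {1..n}" "b \<in> {1..n}" "a \<noteq> b"
  shows "measure_pmf.expectation (H1 n) (\<lambda>h. h a * h b)
       = block_bias (ell n) (blk n a - 1) * block_bias (ell n) (blk n b - 1)"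
proof -
  have "measure_pmf.expectation (H1 n) (\<lambda>h. h a * h b)
      = measure_pmf.expectation (map_pmf (\<lambda>h. (h a, h b)) (H1 n)) (\<lambda>z. fst z * snd z)"
    by simp
  also have "\<dots> = measure_pmf.expectation (sign_pmf (p1 n a)) (\<lambda>x. x)
                * measure_pmf.expectation (sign_pmf (p1 n b)) (\<lambda>x. x)"
    unfolding H1_pair[OF assms] by (intro expectation_pair_pmf_mult finite_set_sign_pmf)
  finally show ?thesis
    using p1_bounds[of n a] p1_bounds[of n b] by (simp add: expectation_sign_pmf p1_eq_block_bias add_divide_distrib[symmetric])
qed

section \<open>Correlations in \<open>\<H>\<^sub>2\<close>\<close>

definition cyc_index :: "nat \<Rightarrow> int \<Rightarrow> nat" where
  "cyc_index n x = nat ((x - 1) mod int n) + 1"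

lemma hv_eq_cyc_index: "hv n h x = h (cyc_index n x)"
  unfolding hv_def cyc_index_def ..

lemma cyc_index_in_range:
  assumes "0 < n"
  shows "cyc_index n x \<in> {1..n}"
proof -
  have "0 \<le> (x - 1) mod int n" "(x - 1) mod int n < int n"
    using assms by simp_all
  then show ?thesis
    unfolding cyc_index_def by (simp add: nat_less_iff)
qed

lemma cyc_index_add_period: "cyc_index n (x + int n) = cyc_index n x"
proof -
  have "x + int n - 1 = (x - 1) + int n"
    by simp
  then show ?thesis
    unfolding cyc_index_def by (simp only: mod_add_self2)
qed

lemma cyc_index_of_nat:
  assumes "1 \<le> i"
  shows "cyc_index n (int i + int m) = (i - 1 + m) mod n + 1"
proof -
  have "int i + int m - 1 = int (i - 1 + m)"
    using assms by simp
  then have "(int i + int m - 1) mod int n = int ((i - 1 + m) mod n)"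
    by (simp only: of_nat_mod)
  then show ?thesis
    unfolding cyc_index_def by simp
qed

lemma hv_shifted:
  assumes "0 < n"
  shows "hv n (\<lambda>i. if i \<in> {1..n} then hv n h (int i + c) else 0) x = hv n h (x + c)"
proof -
  have "int (cyc_index n x) = (x - 1) mod int n + 1"
    using assms by (simp add: cyc_index_def)
  then have "(int (cyc_index n x) + c - 1) mod int n = (x + c - 1) mod int n"
    by (simp add: mod_simps algebra_simps)
  with cyc_index_in_range[OF assms] show ?thesis
    unfolding hv_eq_cyc_index by (simp add: cyc_index_def)
qed

lemma corr2_eq_average:
  assumes "0 < n" "0 < sqn n"
  shows "corr2 n i j = (\<Sum>d<sqn n. measure_pmf.expectation (H1 n)
            (\<lambda>h. h (cyc_index n (i + int (d * sqn n))) * h (cyc_index n (j + int (d * sqn n))))) / real (sqn n)"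
proof -
  let ?G = "\<lambda>d h i. if i \<in> {1..n} then hv n h (int i + int (d * sqn n)) else 0"
  have "corr2 n i j = (\<Sum>d<sqn n. measure_pmf.expectation (map_pmf (?G d) (H1 n))
                         (\<lambda>h. hv n h i * hv n h j) / real (sqn n))"
    unfolding corr2_def H2_def map_pmf_def[symmetric] using assms finite_set_H1
    by (subst pmf_expectation_bind_pmf_of_set) (auto simp: atLeast0LessThan divide_inverse_commute)
  also have "\<dots> = (\<Sum>d<sqn n. measure_pmf.expectation (H1 n)
      (\<lambda>h. h (cyc_index n (i + int (d * sqn n))) * h (cyc_index n (j + int (d * sqn n)))) / real (sqn n))"
    by (simp only: integral_map_pmf hv_shifted[OF assms(1)]) (simp only: hv_eq_cyc_index)
  finally show ?thesis
    by (simp add: sum_divide_distrib)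
qed

lemma sum_lessThan_Suc_periodic:
  fixes f :: "nat \<Rightarrow> 'a::cancel_comm_monoid_add"
  assumes "f s = f 0"
  shows "(\<Sum>d<s. f (Suc d)) = (\<Sum>d<s. f d)"
  using sum.lessThan_Suc_shift[of f s] sum.lessThan_Suc[of f s] assms by (simp add: add.commute)

lemma corr2_shift_block:
  assumes "sqn n * sqn n = n" "0 < sqn n"
  shows "corr2 n i j = corr2 n (i + int (sqn n)) (j + int (sqn n))"
proof -
  let ?s = "sqn n"
  define f where "f d = measure_pmf.expectation (H1 n)
      (\<lambda>h. h (cyc_index n (i + int (d * ?s))) * h (cyc_index n (j + int (d * ?s))))" for d
  have "n > 0"
    using assms by (metis nat_0_less_mult_iff)
  have "f ?s = f 0"
    using cyc_index_add_period[of n i] cyc_index_add_period[of n j] by (simp add: f_def assms(1))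
  then have "(\<Sum>d<?s. f (Suc d)) = (\<Sum>d<?s. f d)"
    by (rule sum_lessThan_Suc_periodic)
  then show ?thesis
    unfolding corr2_eq_average[OF \<open>n > 0\<close> assms(2)] f_def by (simp add: algebra_simps)
qed

lemma blk_mod_add:
  assumes "sqn n * sqn n = n" "0 < sqn n"
  shows "blk n ((x + d * sqn n) mod n + 1) = (x div sqn n + d) mod sqn n + 1"
proof -
  let ?s = "sqn n" and ?y = "x + d * sqn n"
  have "?y mod (?s * ?s) = ?s * (?y div ?s mod ?s) + ?y mod ?s"
    by (rule mod_mult2_eq)
  then have "?y mod n = ?s * (?y div ?s mod ?s) + ?y mod ?s"
    by (simp only: assms(1))
  moreover have "?y div ?s = x div ?s + d" "?y mod ?s < ?s"
    using assms(2) by simp_all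
  ultimately have "?y mod n div ?s = (x div ?s + d) mod ?s"
    by simp
  then show ?thesis
    unfolding blk_def by simp
qed

lemma mod_add_right_inj_below:
  assumes "x < n" "y < n" "(x + m) mod n = (y + m) mod (n::nat)"
  shows "x = y"
proof -
  from assms(3) have "x mod n = y mod n"
    by (simp add: nat_mod_eq_iff)
  with assms(1,2) show ?thesis
    by simp
qed

lemma expectation_H1_shifted_mult:
  assumes "sqn n * sqn n = n" "0 < sqn n" "i \<in> {1..n}" "j \<in> {1..n}" "i \<noteq> j"
  shows "measure_pmf.expectation (H1 n)
           (\<lambda>h. h (cyc_index n (int i + int (d * sqn n))) * h (cyc_index n (int j + int (d * sqn n))))
       = block_bias (ell n) (((i - 1) div sqn n + d) mod sqn n)
       * block_bias (ell n) (((j - 1) div sqn n + d) mod sqn n)"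
proof -
  let ?s = "sqn n"
  define a where "a = (i - 1 + d * ?s) mod n + 1"
  define b where "b = (j - 1 + d * ?s) mod n + 1"
  have "0 < n"
    using assms(3) by simp
  then have "a \<in> {1..n}" "b \<in> {1..n}"
    by (auto simp: a_def b_def Suc_le_eq)
  have "i - 1 < n" "j - 1 < n"
    using assms(3,4) by auto
  then have "a \<noteq> b"
    using mod_add_right_inj_below[of "i - 1" n "j - 1" "d * ?s"] assms(3-5) by (auto simp: a_def b_def)
  have "cyc_index n (int i + int (d * ?s)) = a" "cyc_index n (int j + int (d * ?s)) = b"
    unfolding a_def b_def using assms(3,4) by (simp_all only: cyc_index_of_nat atLeastAtMost_iff)
  moreover have "blk n a = ((i - 1) div ?s + d) mod ?s + 1" "blk n b = ((j - 1) div ?s + d) mod ?s + 1"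
    unfolding a_def b_def by (rule blk_mod_add[OF assms(1,2)])+
  ultimately show ?thesis
    using expectation_H1_mult[OF \<open>a \<in> {1..n}\<close> \<open>b \<in> {1..n}\<close> \<open>a \<noteq> b\<close>] by simp
qed

lemma sum_lessThan_mod_pair:
  assumes "a < (s::nat)"
  shows "(\<Sum>d<s. f ((a + d) mod s) * g ((b + d) mod s)) = (\<Sum>p<s. f p * g ((p + (s - a + b) mod s) mod s))"
proof -
  have "(\<Sum>d<s. f ((a + d) mod s) * g ((b + d) mod s))
      = (\<Sum>d<s. (\<lambda>p. f p * g ((p + (s - a + b) mod s) mod s)) ((a + d) mod s))"
  proof (rule sum.cong[OF refl])
    fix d
    have "((a + d) mod s + (s - a + b) mod s) mod s = (a + d + (s - a + b)) mod s"
      by (rule mod_add_eq)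
    also have "a + d + (s - a + b) = (b + d) + s"
      using assms by simp
    finally show "f ((a + d) mod s) * g ((b + d) mod s)
                = (\<lambda>p. f p * g ((p + (s - a + b) mod s) mod s)) ((a + d) mod s)"
      by simp
  qed
  also have "\<dots> = (\<Sum>p<s. f p * g ((p + (s - a + b) mod s) mod s))"
    using assms by (intro sum_lessThan_add_mod) simp
  finally show ?thesis .
qed

lemma corr2_eq_bias_autocorr:
  assumes "sqn n * sqn n = n" "sqn n = 2 * ell n" "i \<in> {1..n}" "j \<in> {1..n}" "i \<noteq> j"
  shows "corr2 n (int i) (int j)
       = bias_autocorr (ell n) ((sqn n - (i - 1) div sqn n + (j - 1) div sqn n) mod sqn n) / real (sqn n)"
proof -
  let ?s = "sqn n"
  have "0 < n"
    using assms(3) by simp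
  then have "0 < ?s"
    using assms(1) by (metis nat_0_less_mult_iff)
  have "i - 1 < n"
    using assms(3) by auto
  then have "i - 1 < ?s * ?s"
    using assms(1) by simp
  then have "(i - 1) div ?s < ?s"
    by (rule less_mult_imp_div_less)
  from sum_lessThan_mod_pair[OF this, where f = "block_bias (ell n)" and g = "block_bias (ell n)"
      and b = "(j - 1) div ?s"]
  show ?thesis
    unfolding corr2_eq_average[OF \<open>0 < n\<close> \<open>0 < ?s\<close>] expectation_H1_shifted_mult[OF assms(1) \<open>0 < ?s\<close> assms(3-5)]
      bias_autocorr_def assms(2)[symmetric]
    by simp
qed

lemma sum_atLeastAtMost_div_blocks:
  "(\<Sum>i=1..k * s. f ((i - 1) div s)) = real s * (\<Sum>q<k. f q :: real)"
proof (cases "s = 0")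
  case False
  have "(\<Sum>i=1..k * s. f ((i - 1) div s)) = (\<Sum>x<k * s. f (x div s))"
    by (rule sum.reindex_bij_witness[of _ "\<lambda>x. x + 1" "\<lambda>i. i - 1"]) auto
  also have "\<dots> = (\<Sum>q<k. \<Sum>x=q * s..<q * s + s. f (x div s))"
    by (rule sum.nat_group[symmetric])
  also have "\<dots> = (\<Sum>q<k. real s * f q)"
  proof (rule sum.cong[OF refl])
    fix q
    have "x div s = q" if "x \<in> {q * s..<q * s + s}" for x
      using that False by (auto intro: div_nat_eqI simp: mult.commute)
    then show "(\<Sum>x=q * s..<q * s + s. f (x div s)) = real s * f q"
      by simp
  qed
  finally show ?thesis
    by (simp add: sum_distrib_left)
qed simp

lemma sum_abs_corr2_le:
  assumes "sqn n * sqn n = n" "sqn n = 2 * ell n" "1 \<le> ell n"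
  shows "(\<Sum>i\<in>{1..n}. \<Sum>j\<in>{1..n} - {i}. \<bar>corr2 n (int i) (int j)\<bar>) \<le> 32 * real n"
proof -
  let ?s = "sqn n"
  have "0 < ?s"
    using assms by simp
  have "(\<Sum>j\<in>{1..n} - {i}. \<bar>corr2 n (int i) (int j)\<bar>) \<le> 32" if i: "i \<in> {1..n}" for i
  proof -
    let ?c = "?s - (i - 1) div ?s"
    have "(\<Sum>j\<in>{1..n} - {i}. \<bar>corr2 n (int i) (int j)\<bar>)
        = (\<Sum>j\<in>{1..n} - {i}. \<bar>bias_autocorr (ell n) ((?c + (j - 1) div ?s) mod ?s)\<bar> / real ?s)"
      using i by (intro sum.cong refl) (simp add: corr2_eq_bias_autocorr[OF assms(1,2)])
    also have "\<dots> \<le> (\<Sum>j=1..?s * ?s. \<bar>bias_autocorr (ell n) ((?c + (j - 1) div ?s) mod ?s)\<bar> / real ?s)"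
      unfolding assms(1) by (intro sum_mono2) auto
    also have "\<dots> = real ?s * (\<Sum>b<?s. \<bar>bias_autocorr (ell n) ((?c + b) mod ?s)\<bar> / real ?s)"
      by (rule sum_atLeastAtMost_div_blocks)
    also have "\<dots> = (\<Sum>b<?s. \<bar>bias_autocorr (ell n) ((?c + b) mod ?s)\<bar>)"
      using \<open>0 < ?s\<close> by (simp add: sum_divide_distrib[symmetric])
    also have "\<dots> = (\<Sum>t<?s. \<bar>bias_autocorr (ell n) t\<bar>)"
      using \<open>0 < ?s\<close> by (rule sum_lessThan_add_mod)
    also have "\<dots> \<le> 32"
      using sum_abs_bias_autocorr_le[OF assms(3)] by (simp only: assms(2))
    finally show ?thesis .
  qed
  then have "(\<Sum>i\<in>{1..n}. \<Sum>j\<in>{1..n} - {i}. \<bar>corr2 n (int i) (int j)\<bar>) \<le> (\<Sum>i\<in>{1..n}. 32)"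
    by (intro sum_mono)
  then show ?thesis
    by simp
qed

lemma power_of_4_params:
  assumes "n = 4 ^ k" "4 \<le> n"
  shows "sqn n * sqn n = n" "sqn n = 2 * ell n" "1 \<le> ell n"
proof -
  have "1 \<le> k"
    using assms by (cases k) auto
  have "n = 2 ^ k * 2 ^ k"
    unfolding assms(1) by (simp flip: power_mult_distrib)
  then have "sqrt (real n) = real (2 ^ k)"
    by (simp only: of_nat_mult real_sqrt_mult_self) simp
  then have "sqn n = 2 ^ k"
    unfolding sqn_def by simp
  moreover have "(2::nat) ^ k = 2 * 2 ^ (k - 1)"
    using \<open>1 \<le> k\<close> by (cases k) auto
  ultimately show "sqn n * sqn n = n" "sqn n = 2 * ell n" "1 \<le> ell n"
    using \<open>n = 2 ^ k * 2 ^ k\<close> by (simp_all add: ell_def)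
qed

theorem lemma2p2:
  shows "(\<forall>n::nat. (\<exists>k::nat. n = 4 ^ k) \<and> n \<ge> 4 \<longrightarrow>
            (\<forall>i j :: int. corr2 n i j = corr2 n (i + int (sqn n)) (j + int (sqn n)))
          \<and> (\<forall>i i' j j' :: nat. i \<in> {1..n} \<and> i' \<in> {1..n} \<and> j \<in> {1..n} \<and> j' \<in> {1..n}
                \<and> blk n i = blk n i' \<and> blk n j = blk n j' \<and> i \<noteq> j \<and> i' \<noteq> j'
                \<longrightarrow> corr2 n (int i) (int j) = corr2 n (int i') (int j')))
       \<and> (\<exists>C::real. \<forall>n::nat. (\<exists>k::nat. n = 4 ^ k) \<and> n \<ge> 4 \<longrightarrow>
            (\<Sum>i\<in>{1..n}. \<Sum>j\<in>{1..n} - {i}. \<bar>corr2 n (int i) (int j)\<bar>) \<le> C * real n)"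
proof (intro conjI allI impI exI[of _ 32])
  fix n :: nat
  assume "(\<exists>k. n = 4 ^ k) \<and> 4 \<le> n"
  then obtain k where "n = 4 ^ k" "4 \<le> n"
    by blast
  note params = power_of_4_params[OF this]
  then have "0 < sqn n"
    by simp
  show "corr2 n i j = corr2 n (i + int (sqn n)) (j + int (sqn n))" for i j
    using corr2_shift_block[OF params(1) \<open>0 < sqn n\<close>] .
  show "corr2 n (int i) (int j) = corr2 n (int i') (int j')"
    if "i \<in> {1..n} \<and> i' \<in> {1..n} \<and> j \<in> {1..n} \<and> j' \<in> {1..n}
        \<and> blk n i = blk n i' \<and> blk n j = blk n j' \<and> i \<noteq> j \<and> i' \<noteq> j'" for i i' j j'
  proof -
    have "(i - 1) div sqn n = (i' - 1) div sqn n" "(j - 1) div sqn n = (j' - 1) div sqn n"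
      using that by (simp_all add: blk_def)
    with that show ?thesis
      by (simp add: corr2_eq_bias_autocorr[OF params(1,2)])
  qed
  show "(\<Sum>i\<in>{1..n}. \<Sum>j\<in>{1..n} - {i}. \<bar>corr2 n (int i) (int j)\<bar>) \<le> 32 * real n"
    using sum_abs_corr2_le[OF params] .
qed

end
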